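(* In the setting and construction described in the context, let $n\in\mathbb{N}$, $k\in\mathbb{N}\cup\{0\}$ and $x\in Z(p_n,\dots,p_{n+k})$. Then there exist pairwise disjointly supported vectors $(y_j)_{j=0}^k$ in $c_{00}$ such that $x=\sum_{j=0}^ky_j$, $\|y_j\|_{\ell^1}=\theta_{p_{n+j}}^{-1}$ for $0\le j\le k$, and $\operatorname{supp}y_j\in[\mathcal{S}_{\eta_n+1},\dots,\mathcal{S}_{\eta_{n+j}+1}]\cap[M_{n+j}]^{<\infty}$ for $0\le j\le k$.
   Context: Standing setting: $(\theta_n)$ nonincreasing null in $(0,1)$; $(\mathcal{F}_n)$ regular families (hereditary, spreading, compact in $[\mathbb{N}]^{<\infty}\subseteq 2^{\mathbb{N}}$); $X=T[(\theta_n,\mathcal{F}_n)]$ as usual (completion of $c_{00}$ under $\|x\|=\max\{\|x\|_{c_0},\sup_n\sup\theta_n\sum_i\|E_ix\|\}$ over $\mathcal{F}_n$-admissible $(E_i)$, i.e. $E_1<\dots<E_k$ with $\{\min E_i\}\in\mathcal{F}_n$); $(e_k)$ unit vectors. $\alpha_n=\iota(\mathcal{F}_n)>1$ (Cantor–Bendixson index), $\alpha=\sup\alpha_n\ne\alpha_n$ for all $n$, $\alpha=\omega^{\omega^\xi}$, $0<\xi<\omega_1$. Schreier families: $\mathcal{S}_0$ = singletons and $\emptyset$, $\mathcal{S}_1=\{F:|F|\le\min F\}$, $\mathcal{S}_{\beta+1}=\mathcal{S}_1[\mathcal{S}_\beta]$, limit $\beta$: $\mathcal{S}_\beta=\{F\in\mathcal{S}_{\beta_k}\text{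 some }k\le\min F\}$ for a fixed $\beta_k\uparrow\beta$. $\mathcal{M}[\mathcal{N}]$ = unions of $\mathcal{M}$-admissible sequences of members of $\mathcal{N}$; $[\mathcal{M}_1]=\mathcal{M}_1$, $[\mathcal{M}_1,\dots,\mathcal{M}_{i+1}]=[\mathcal{M}_1,\dots,\mathcal{M}_i][\mathcal{M}_{i+1}]$, empty list gives $\mathcal{S}_0$. $\|y\|_{\mathcal{F}}=\sup_{F\in\mathcal{F}}\sum_{k\in F}|y_k|$. $\ell(\beta)$ = leading exponent of the Cantor normal form. $\gamma(\varepsilon,m)=\max\{\ell(\alpha_{n_s}\cdots\alpha_{n_1}):\varepsilon\theta_{n_1}\cdots\theta_{n_s}>\theta_m\}$ ($\max\emptyset=0$). Assume $(\dagger)$: there is $\varepsilon>0$ such that for every $\beta<\omega^\xi$ some $m$ has $\gamma(\varepsilon,m)+2+\beta<\ell(\alpha_m)$; fix such $\varepsilon\in(0,1)$. $K_{\delta,p,\eta}=\{(0,n_1,\dots,n_s):s\ge0,\ \theta_{n_1}\cdots\theta_{n_s}>\delta\theta_p,\ \ell(\alpha_{n_s}\cdots\alpha_{n_1})<\eta\}$ (finite). Construction: $(\beta_n)$ is the sequence increasing to $\omega^\xi$ defining $\mathcal{S}_{\omega^\xi}$; $M_0$ infinite. Choose $p_1$ with $\theta_{p_1}\le\varepsilon^2/4$ and $\gamma(\varepsilon,p_1)+2+\beta_1<\ell(\alpha_{p_1})$, $\eta_1=\gamma(\varepsilon,p_1)+1$, $q_1$ with $\theta_{q_1}\le\varepsilon\theta_{p_1}/4$,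 infinite $M_1\subseteq M_0$ with $\mathcal{S}_{\beta_1}[\mathcal{S}_{\eta_1+1}]\cap[M_1]^{<\infty}\subseteq\mathcal{F}_{p_1}$ and $[\mathcal{F}_{n_1},\dots,\mathcal{F}_{n_s}]\cap[M_1]^{<\infty}\subseteq\mathcal{S}_{\eta_1}$ for all $(0,n_1,\dots,n_s)\in K_{4^{-1},p_1,\eta_1}$. For $n\ge2$: $p_n>q_{n-1}$ with $\theta_{p_n}\le\varepsilon^2/4^n$ and $\gamma(\varepsilon,p_n)+2+\gamma(\varepsilon,q_{n-1})+2+\eta_{n-1}+1+\dots+\eta_1+1+\beta_n<\ell(\alpha_{p_n})$; $\eta_n=\gamma(\varepsilon,p_n)+\gamma(\varepsilon,q_{n-1})+1$; $q_n>p_n$ with $\theta_{q_n}\le\varepsilon\theta_{p_n}/4^n$; infinite $M_n\subseteq M_{n-1}$ with $\mathcal{S}_{\beta_n}[\mathcal{S}_{\eta_1+1},\dots,\mathcal{S}_{\eta_n+1}]\cap[M_n]^{<\infty}\subseteq\mathcal{F}_{p_n}$ and $[\mathcal{F}_{n_1},\dots,\mathcal{F}_{n_s}]\cap[M_n]^{<\infty}\subseteq\mathcal{S}_{\eta_n}$ for all $(0,n_1,\dots,n_s)\in K_{4^{-n},p_n,\eta_n}$. $Z(p_n)$ is the set of $x\in c_{00}$ with $\|x\|_{\ell^1}=\theta_{p_n}^{-1}$, $\operatorname{supp}x\in\mathcal{S}_{\eta_n+1}\cap[M_n]^{<\infty}$, and $\|x\|_{\mathcal{S}_{\eta_n}}\le4^{-n}(|K_{4^{-n},p_n,\eta_n}|+1)^{-1}$.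 Inductively, $Z(p_n,\dots,p_{n+k})$ ($k\ge1$) is the set of vectors $\theta_{p_n}^{-1}\sum_{i=1}^ra_ie_{m_i}+\sum_{i=1}^ra_iz_i$ with $m_1<\operatorname{supp}z_1<\dots<m_r<\operatorname{supp}z_r$, $\theta_{p_n}^{-1}\sum_ia_ie_{m_i}\in Z(p_n)$ and $z_i\in Z(p_{n+1},\dots,p_{n+k})$. *)

theory Defs
  imports Complex_Main
begin

text \<open>A limit node carries its fundamental sequence (indexed from 1), which is
exactly the data the paper fixes to define Schreier families at limit ordinals.\<close>
datatype ord = OZ | OS ord | OL "nat \<Rightarrow> ord"

definition S0 :: "nat set set" where
  "S0 = {{}} \<union> {{k} | k. True}"

definition S1 :: "nat set set" where
  "S1 = {F. finite F \<and> (\<forall>m\<in>F. card F \<le> m)}"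

definition blk_less :: "nat set \<Rightarrow> nat set \<Rightarrow> bool" where
  "blk_less A B \<longleftrightarrow> (\<forall>a\<in>A. \<forall>b\<in>B. a < b)"

text \<open>M[N]: unions of M-admissible sequences E_1 < ... < E_k of (nonempty) members of N,
i.e. {min E_i} in M.\<close>
definition bracket :: "nat set set \<Rightarrow> nat set set \<Rightarrow> nat set set" where
  "bracket \<M> \<N> = {\<Union>(set Es) | Es.
      (\<forall>E\<in>set Es. E \<in> \<N> \<and> E \<noteq> {}) \<and> sorted_wrt blk_less Es \<and> set (map Min Es) \<in> \<M>}"

text \<open>[M_1,...,M_j] = [M_1,...,M_{j-1}][M_j]; the empty list gives S_0.\<close>
fun blist :: "nat set set list \<Rightarrow> nat set set" where
  "blist [] = S0"
| "blist (\<M> # Ms) = foldl bracket \<M> Ms"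

primrec schreier :: "ord \<Rightarrow> nat set set" where
  "schreier OZ = S0"
| "schreier (OS b) = bracket S1 (schreier b)"
| "schreier (OL f) = {F. \<exists>k\<ge>1. (\<forall>m\<in>F. k \<le> m) \<and> F \<in> (schreier \<circ> f) k}"

definition hereditary :: "nat set set \<Rightarrow> bool" where
  "hereditary \<F> \<longleftrightarrow> (\<forall>A\<in>\<F>. \<forall>B. B \<subseteq> A \<longrightarrow> B \<in> \<F>)"

definition spreading :: "nat set set \<Rightarrow> bool" where
  "spreading \<F> \<longleftrightarrow> (\<forall>a b. \<forall>k::nat. strict_mono_on {..<k} a \<and> strict_mono_on {..<k} b
       \<and> (\<forall>i<k. a i \<le> b i) \<and> a ` {..<k} \<in> \<F> \<longrightarrow> b ` {..<k} \<in> \<F>)"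

text \<open>compact subset of [N]^{<\<infinity>} in 2^N (product topology): all members finite and
closed under pointwise limits of sequences (2^N is compact metrizable).\<close>
definition compact_family :: "nat set set \<Rightarrow> bool" where
  "compact_family \<F> \<longleftrightarrow> (\<forall>A\<in>\<F>. finite A) \<and>
     (\<forall>(As :: nat \<Rightarrow> nat set) A. (\<forall>j. As j \<in> \<F>) \<and>
        (\<forall>t. \<forall>\<^sub>F j in sequentially. (t \<in> As j \<longleftrightarrow> t \<in> A)) \<longrightarrow> A \<in> \<F>)"

definition regular_family :: "nat set set \<Rightarrow> bool" where
  "regular_family \<F> \<longleftrightarrow> hereditary \<F> \<and> spreading \<F> \<and> compact_family \<F>"

definition supp :: "(nat \<Rightarrow> real) \<Rightarrow> nat set" where
  "supp x = {t. x t \<noteq> 0}"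

definition c00 :: "(nat \<Rightarrow> real) set" where
  "c00 = {x. finite (supp x)}"

definition l1norm :: "(nat \<Rightarrow> real) \<Rightarrow> real" where
  "l1norm x = (\<Sum>t\<in>supp x. \<bar>x t\<bar>)"

definition unitv :: "nat \<Rightarrow> nat \<Rightarrow> real" where
  "unitv m = (\<lambda>t. if t = m then 1 else 0)"

definition famnorm :: "nat set set \<Rightarrow> (nat \<Rightarrow> real) \<Rightarrow> real" where
  "famnorm \<F> x = (SUP F\<in>\<F>. \<Sum>t\<in>F. \<bar>x t\<bar>)"

text \<open>Zset \<theta> p \<eta> M Kc n k = Z(p_n,...,p_{n+k}); Kc n stands for |K_{4^{-n},p_n,\<eta>_n}|.\<close>
definition Z1 :: "(nat \<Rightarrow> real) \<Rightarrow> (nat \<Rightarrow> nat) \<Rightarrow> (nat \<Rightarrow> ord) \<Rightarrow> (nat \<Rightarrow> nat set)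
    \<Rightarrow> (nat \<Rightarrow> nat) \<Rightarrow> nat \<Rightarrow> (nat \<Rightarrow> real) set" where
  "Z1 \<theta> p \<eta> M Kc n = {x. x \<in> c00 \<and> l1norm x = 1 / \<theta> (p n)
      \<and> supp x \<in> schreier (OS (\<eta> n)) \<and> supp x \<subseteq> M n
      \<and> famnorm (schreier (\<eta> n)) x \<le> 1 / (4 ^ n * (real (Kc n) + 1))}"

primrec Zset :: "(nat \<Rightarrow> real) \<Rightarrow> (nat \<Rightarrow> nat) \<Rightarrow> (nat \<Rightarrow> ord) \<Rightarrow> (nat \<Rightarrow> nat set)
    \<Rightarrow> (nat \<Rightarrow> nat) \<Rightarrow> nat \<Rightarrow> nat \<Rightarrow> (nat \<Rightarrow> real) set" where
  "Zset \<theta> p \<eta> M Kc n 0 = Z1 \<theta> p \<eta> M Kc n"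
| "Zset \<theta> p \<eta> M Kc n (Suc k) = {x. \<exists>(r::nat) (a::nat \<Rightarrow> real) (m::nat \<Rightarrow> nat) (z::nat \<Rightarrow> nat \<Rightarrow> real).
      (\<forall>i<r. (\<forall>t\<in>supp (z i). m i < t) \<and> (Suc i < r \<longrightarrow> (\<forall>t\<in>supp (z i). t < m (Suc i))))
      \<and> (\<lambda>t. (1 / \<theta> (p n)) * (\<Sum>i<r. a i * unitv (m i) t)) \<in> Z1 \<theta> p \<eta> M Kc n
      \<and> (\<forall>i<r. z i \<in> Zset \<theta> p \<eta> M Kc (Suc n) k)
      \<and> x = (\<lambda>t. (1 / \<theta> (p n)) * (\<Sum>i<r. a i * unitv (m i) t) + (\<Sum>i<r. a i * z i t))}"

end

theory Submission
  imports Defs "HOL-Library.Disjoint_Sets"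
begin

(* A vector of Z(p_n,...,p_{n+k+1}) has the form
     x = theta_{p_n}^{-1} sum_i a_i e_{m_i} + sum_i a_i z_i,   m_1 < supp z_1 < m_2 < supp z_2 < ...,
   and by induction each z_i splits into pieces w_i^0, ..., w_i^k.  Take y_0 the first summand and
   y_{j+1} = sum_i a_i w_i^j.  The l1-norm of y_0 forces sum_i |a_i| = 1 and the blocks are
   disjoint, so y_{j+1} has the norm of the w_i^j.  Moving each m_i to min supp w_i^j spreads
   supp y_0, a set of S_{eta_n+1}, so supp y_{j+1} is an S_{eta_n+1}-admissible union of
   [S_{eta_{n+1}+1},...,S_{eta_{n+j+1}+1}]-sets, and associativity of M[N] finishes. *)

section \<open>Spreading and associativity of the bracket\<close>

lemma finite_schreier: "F \<in> schreier b \<Longrightarrow> finite F"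
  by (induction b arbitrary: F) (auto simp: S0_def bracket_def)

lemma bracketI:
  assumes "\<forall>E\<in>set Es. E \<in> N \<and> E \<noteq> {}" "sorted_wrt blk_less Es" "set (map Min Es) \<in> X"
  shows "\<Union>(set Es) \<in> bracket X N"
  using assms unfolding bracket_def by blast

lemma bracketE:
  assumes "U \<in> bracket X N"
  obtains Es where "\<forall>E\<in>set Es. E \<in> N \<and> E \<noteq> {}" "sorted_wrt blk_less Es"
    "set (map Min Es) \<in> X" "U = \<Union>(set Es)"
  using assms unfolding bracket_def by blast

lemma bracket_mono: "X \<subseteq> X' \<Longrightarrow> bracket X N \<subseteq> bracket X' N"
  unfolding bracket_def by blast

text \<open>Spreading in image form (\<open>spreading\<close> of the definitions is the index-wise form).\<close>
definition spreading_by_maps :: "nat set set \<Rightarrow> bool" where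
  "spreading_by_maps \<F> \<longleftrightarrow>
     (\<forall>A\<in>\<F>. \<forall>f. strict_mono_on A f \<and> (\<forall>a\<in>A. a \<le> f a) \<longrightarrow> f ` A \<in> \<F>)"

lemma Min_image_strict_mono_on:
  assumes "finite E" "E \<noteq> {}" "strict_mono_on E f"
  shows "Min (f ` E) = f (Min E)"
proof (rule Min_eqI)
  fix y assume "y \<in> f ` E"
  then obtain e where "e \<in> E" "y = f e" by auto
  with assms show "f (Min E) \<le> y"
    by (metis Min_in Min_le le_less strict_mono_onD)
qed (use assms in auto)

lemma spreading_by_maps_S0: "spreading_by_maps S0"
  unfolding spreading_by_maps_def S0_def by auto

lemma spreading_by_maps_S1: "spreading_by_maps S1"
  unfolding spreading_by_maps_def S1_def
proof (intro ballI allI impI)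
  fix A f assume A: "A \<in> {F. finite F \<and> (\<forall>m\<in>F. card F \<le> m)}"
    and f: "strict_mono_on A f \<and> (\<forall>a\<in>A. a \<le> f a)"
  then have "card (f ` A) = card A"
    using strict_mono_on_imp_inj_on card_image by blast
  then show "f ` A \<in> {F. finite F \<and> (\<forall>m\<in>F. card F \<le> m)}"
    using A f by fastforce
qed

lemma spreading_by_maps_bracket:
  assumes X: "spreading_by_maps X" and N: "spreading_by_maps N" and fin: "\<forall>E\<in>N. finite E"
  shows "spreading_by_maps (bracket X N)"
  unfolding spreading_by_maps_def
proof (intro ballI allI impI)
  fix A f assume A: "A \<in> bracket X N" and f: "strict_mono_on A f \<and> (\<forall>a\<in>A. a \<le> f a)"
  obtain Es where Es: "\<forall>E\<in>set Es. E \<in> N \<and> E \<noteq> {}" "sorted_wrt blk_less Es"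
    "set (map Min Es) \<in> X" "A = \<Union>(set Es)"
    using A by (rule bracketE)
  have f_on: "strict_mono_on E f \<and> (\<forall>a\<in>E. a \<le> f a)" if "E \<subseteq> A" for E
    using f that by (meson monotone_on_subset subsetD)
  have Min_f: "Min (f ` E) = f (Min E)" if "E \<in> set Es" for E
    using Union_upper[OF that] Es(1,4) fin f_on[of E] that by (auto intro: Min_image_strict_mono_on)
  have Mins_A: "set (map Min Es) \<subseteq> A"
    using Es(1,4) fin by auto
  have "f ` E \<in> N \<and> f ` E \<noteq> {}" if "E \<in> set Es" for E
    using Union_upper[OF that] Es(1,4) N f_on[of E] that unfolding spreading_by_maps_def by blast
  then have pieces: "\<forall>E\<in>set (map ((`) f) Es). E \<in> N \<and> E \<noteq> {}"
    by auto
  have sorted: "sorted_wrt blk_less (map ((`) f) Es)"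
    unfolding sorted_wrt_map using Es(2)
  proof (rule sorted_wrt_mono_rel[rotated])
    fix E1 E2 assume "E1 \<in> set Es" "E2 \<in> set Es" "blk_less E1 E2"
    then show "blk_less (f ` E1) (f ` E2)"
      using Es(4) f unfolding blk_less_def by (auto intro: strict_mono_onD[of A f])
  qed
  have "f ` set (map Min Es) \<in> X"
    using X Es(3) f_on[OF Mins_A] unfolding spreading_by_maps_def by blast
  then have "set (map Min (map ((`) f) Es)) \<in> X"
    using Min_f by (auto simp: image_image cong: image_cong)
  with pieces sorted have "\<Union>(set (map ((`) f) Es)) \<in> bracket X N"
    by (rule bracketI)
  then show "f ` A \<in> bracket X N"
    using Es(4) by (simp add: image_Union)
qed

lemma spreading_by_maps_schreier: "spreading_by_maps (schreier b)"
proof (induction b)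
  case OZ
  then show ?case by (simp add: spreading_by_maps_S0)
next
  case (OS b)
  then show ?case
    using spreading_by_maps_bracket[OF spreading_by_maps_S1] finite_schreier by auto
next
  case (OL g)
  show ?case unfolding spreading_by_maps_def
  proof (intro ballI allI impI)
    fix A f assume A: "A \<in> schreier (OL g)" and f: "strict_mono_on A f \<and> (\<forall>a\<in>A. a \<le> f a)"
    then obtain k where k: "k \<ge> 1" "\<forall>a\<in>A. k \<le> a" "A \<in> schreier (g k)" by auto
    then have "f ` A \<in> schreier (g k)"
      using OL[of "g k"] f unfolding spreading_by_maps_def by auto
    moreover have "\<forall>b\<in>f ` A. k \<le> b"
      using k(2) f by force
    ultimately show "f ` A \<in> schreier (OL g)"
      using k(1) by auto
  qed
qed

lemma Min_Union:
  assumes "finite S" "S \<noteq> {}" "\<forall>E\<in>S. finite E \<and> E \<noteq> {}"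
  shows "Min (\<Union>S) = Min (Min ` S)"
proof (rule antisym)
  have "Min (Min ` S) \<in> Min ` S"
    using assms by (intro Min_in) auto
  then obtain E where E: "E \<in> S" "Min (Min ` S) = Min E"
    by auto
  then have "Min E \<in> \<Union>S"
    using assms by (auto intro: Min_in)
  then show "Min (\<Union>S) \<le> Min (Min ` S)"
    using assms E by (intro Min_le) auto
  show "Min (Min ` S) \<le> Min (\<Union>S)"
  proof -
    obtain E where E: "E \<in> S" "Min (\<Union>S) \<in> E"
      using assms Min_in[of "\<Union>S"] by auto
    have "Min (Min ` S) \<le> Min E"
      using assms E by (intro Min_le) auto
    also have "Min E \<le> Min (\<Union>S)"
      using assms E by (intro Min_le) auto
    finally show ?thesis .
  qed
qed

lemma sorted_wrt_concat:
  "\<forall>xs\<in>set xss. sorted_wrt R xs \<Longrightarrow> sorted_wrt (\<lambda>xs ys. \<forall>x\<in>set xs. \<forall>y\<in>set ys. R x y) xss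
    \<Longrightarrow> sorted_wrt R (concat xss)"
  by (induction xss) (auto simp: sorted_wrt_append)

lemma sorted_wrt_blk_less_concat:
  assumes "sorted_wrt blk_less Fs"
    and "\<And>F. F \<in> set Fs \<Longrightarrow> sorted_wrt blk_less (g F) \<and> F = \<Union>(set (g F))"
  shows "sorted_wrt blk_less (concat (map g Fs))"
proof (rule sorted_wrt_concat)
  show "\<forall>Gs\<in>set (map g Fs). sorted_wrt blk_less Gs"
    using assms(2) by auto
  show "sorted_wrt (\<lambda>Gs Hs. \<forall>G\<in>set Gs. \<forall>H\<in>set Hs. blk_less G H) (map g Fs)"
    unfolding sorted_wrt_map using assms(1)
    by (rule sorted_wrt_mono_rel[rotated]) (use assms(2) in \<open>simp add: blk_less_def, blast\<close>)
qed

text \<open>The minima of the pieces of one block form an \<open>N\<close>-set with the same minimum as the block.\<close>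
lemma Mins_concat_in_bracket:
  assumes fin: "\<forall>E\<in>P. finite E"
    and Fs: "sorted_wrt blk_less Fs" "set (map Min Fs) \<in> X"
    and g: "\<And>F. F \<in> set Fs \<Longrightarrow> F \<noteq> {} \<and> (\<forall>E\<in>set (g F). E \<in> P \<and> E \<noteq> {})
      \<and> set (map Min (g F)) \<in> N \<and> F = \<Union>(set (g F))"
  shows "set (map Min (concat (map g Fs))) \<in> bracket X N"
proof -
  define Ms where "Ms = map (\<lambda>F. set (map Min (g F))) Fs"
  have Mins_sub: "set (map Min (g F)) \<subseteq> F" if "F \<in> set Fs" for F
  proof -
    have "Min E \<in> E" if "E \<in> set (g F)" for E
      using g[OF \<open>F \<in> set Fs\<close>] fin that by (simp add: Min_in)
    then show ?thesis
      using g[OF that] by auto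
  qed
  have g_ne: "g F \<noteq> []" if "F \<in> set Fs" for F
    using g[OF that] by auto
  have Min_Mins: "Min (set (map Min (g F))) = Min F" if "F \<in> set Fs" for F
    using g[OF that] fin Min_Union[of "set (g F)"] by fastforce
  have "sorted_wrt blk_less Ms"
    unfolding Ms_def sorted_wrt_map using Fs(1)
    by (rule sorted_wrt_mono_rel[rotated]) (use Mins_sub in \<open>simp add: blk_less_def, blast\<close>)
  then have "\<Union>(set Ms) \<in> bracket X N"
    using g Fs(2) g_ne Min_Mins unfolding Ms_def by (intro bracketI) (auto simp: image_image)
  moreover have "set (map Min (concat (map g Fs))) = \<Union>(set Ms)"
    unfolding Ms_def by auto
  ultimately show ?thesis
    by simp
qed

lemma bracket_bracket_subset:
  assumes fin: "\<forall>E\<in>P. finite E"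
  shows "bracket X (bracket N P) \<subseteq> bracket (bracket X N) P"
proof
  fix U assume "U \<in> bracket X (bracket N P)"
  then obtain Fs where Fs: "\<forall>F\<in>set Fs. F \<in> bracket N P \<and> F \<noteq> {}" "sorted_wrt blk_less Fs"
    "set (map Min Fs) \<in> X" "U = \<Union>(set Fs)"
    by (rule bracketE)
  have "\<forall>F\<in>set Fs. \<exists>Es. (\<forall>E\<in>set Es. E \<in> P \<and> E \<noteq> {}) \<and> sorted_wrt blk_less Es
      \<and> set (map Min Es) \<in> N \<and> F = \<Union>(set Es)"
    using Fs(1) bracketE by metis
  then obtain g where g: "\<And>F. F \<in> set Fs \<Longrightarrow> (\<forall>E\<in>set (g F). E \<in> P \<and> E \<noteq> {})
      \<and> sorted_wrt blk_less (g F) \<and> set (map Min (g F)) \<in> N \<and> F = \<Union>(set (g F))"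
    by metis
  have "set (map Min (concat (map g Fs))) \<in> bracket X N"
    using fin Fs(2,3) by (rule Mins_concat_in_bracket) (use g Fs(1) in blast)
  moreover have "sorted_wrt blk_less (concat (map g Fs))"
    using Fs(2) by (rule sorted_wrt_blk_less_concat) (use g in blast)
  ultimately have "\<Union>(set (concat (map g Fs))) \<in> bracket (bracket X N) P"
    using g by (intro bracketI) auto
  moreover have "\<Union>(set (concat (map g Fs))) = U"
  proof -
    have "\<Union>(set (concat (map g Fs))) = (\<Union>F\<in>set Fs. \<Union>(set (g F)))"
      by auto
    also have "\<dots> = (\<Union>F\<in>set Fs. F)"
      using g by (intro SUP_cong) auto
    finally show ?thesis
      using Fs(4) by simp
  qed
  ultimately show "U \<in> bracket (bracket X N) P"
    by simp
qed

lemma bracket_foldl_subset: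
  "\<forall>C\<in>set Ns. \<forall>E\<in>C. finite E \<Longrightarrow> bracket X (foldl bracket N Ns) \<subseteq> foldl bracket (bracket X N) Ns"
proof (induction Ns rule: rev_induct)
  case Nil
  then show ?case by simp
next
  case (snoc C Ns)
  have "bracket X (foldl bracket N (Ns @ [C])) \<subseteq> bracket (bracket X (foldl bracket N Ns)) C"
    using bracket_bracket_subset snoc.prems by simp
  also have "\<dots> \<subseteq> foldl bracket (bracket X N) (Ns @ [C])"
    using bracket_mono snoc by simp
  finally show ?case .
qed

lemma bracket_blist_subset:
  assumes "Ns \<noteq> []" "\<forall>C\<in>set Ns. \<forall>E\<in>C. finite E"
  shows "bracket X (blist Ns) \<subseteq> blist (X # Ns)"
  using assms bracket_foldl_subset by (cases Ns) auto

text \<open>Moving each \<open>m i\<close> to \<open>Min (G i)\<close> spreads \<open>m ` I\<close>, so the minima of the blocks form an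
  \<open>X\<close>-set.\<close>
lemma Union_blocks_in_bracket:
  fixes m :: "nat \<Rightarrow> nat" and G :: "nat \<Rightarrow> nat set"
  assumes X: "spreading_by_maps X" and I: "finite I"
    and m: "strict_mono_on I m" "m ` I \<in> X"
    and G: "\<forall>i\<in>I. G i \<in> N \<and> G i \<noteq> {} \<and> finite (G i)"
    and blocks: "\<forall>i\<in>I. \<forall>i'\<in>I. i < i' \<longrightarrow> blk_less (G i) (G i')"
    and dominated: "\<forall>i\<in>I. \<forall>t\<in>G i. m i \<le> t"
  shows "(\<Union>i\<in>I. G i) \<in> bracket X N"
proof -
  define Es where "Es = map G (sorted_list_of_set I)"
  define f where "f u = Min (G (inv_into I m u))" for u
  have f_m: "f (m i) = Min (G i)" if "i \<in> I" for i
    unfolding f_def using inv_into_f_f[OF strict_mono_on_imp_inj_on[OF m(1)] that] by simp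
  have "strict_mono_on (m ` I) f"
  proof (rule strict_mono_onI)
    fix u v assume "u \<in> m ` I" "v \<in> m ` I" "u < v"
    then obtain i i' where i: "i \<in> I" "i' \<in> I" "u = m i" "v = m i'" "i < i'"
      using strict_mono_on_less[OF m(1)] by auto
    then have "blk_less (G i) (G i')"
      using blocks by blast
    moreover have "Min (G i) \<in> G i" "Min (G i') \<in> G i'"
      using G i by simp_all
    ultimately show "f u < f v"
      using f_m i by (simp add: blk_less_def)
  qed
  moreover have "\<forall>u\<in>m ` I. u \<le> f u"
    using f_m G dominated by auto
  ultimately have "f ` m ` I \<in> X"
    using X m(2) unfolding spreading_by_maps_def by blast
  moreover have "f ` m ` I = set (map Min Es)"
    unfolding Es_def using I f_m by (auto simp: image_image)
  moreover have "sorted_wrt blk_less Es"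
    unfolding Es_def sorted_wrt_map using sorted_list_of_set.strict_sorted_key_list_of_set[of I]
    by (rule sorted_wrt_mono_rel[rotated]) (use blocks I in simp)
  ultimately have "\<Union>(set Es) \<in> bracket X N"
    using G I unfolding Es_def by (intro bracketI) auto
  then show ?thesis
    unfolding Es_def using I by simp
qed

section \<open>Disjointly supported linear combinations\<close>

lemma supp_unitv: "supp (unitv k) = {k}"
  by (auto simp: supp_def unitv_def)

lemma l1norm_unitv: "l1norm (unitv k) = 1"
  unfolding l1norm_def supp_unitv by (simp add: unitv_def)

lemma l1norm_superset: "finite S \<Longrightarrow> supp y \<subseteq> S \<Longrightarrow> l1norm y = (\<Sum>t\<in>S. \<bar>y t\<bar>)"
  unfolding l1norm_def by (rule sum.mono_neutral_left) (auto simp: supp_def)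

lemma l1norm_supp_empty: "supp y = {} \<Longrightarrow> l1norm y = 0"
  by (simp add: l1norm_def)

lemma lincomb_apply:
  assumes "finite I" "disjoint_family_on (\<lambda>i. supp (w i)) I" "i \<in> I" "t \<in> supp (w i)"
  shows "(\<Sum>i'\<in>I. a i' * w i' t) = a i * w i t"
proof -
  have "(\<Sum>i'\<in>I. a i' * w i' t) = (\<Sum>i'\<in>{i}. a i' * w i' t)"
    using assms by (intro sum.mono_neutral_right) (auto simp: supp_def disjoint_family_on_def)
  then show ?thesis
    by simp
qed

lemma supp_lincomb_subset: "supp (\<lambda>t. \<Sum>i\<in>I. a i * w i t) \<subseteq> (\<Union>i\<in>I. supp (w i))"
proof
  fix t assume "t \<in> supp (\<lambda>t. \<Sum>i\<in>I. a i * w i t)"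
  then have "(\<Sum>i\<in>I. a i * w i t) \<noteq> 0"
    by (simp add: supp_def)
  then obtain i where "i \<in> I" "a i * w i t \<noteq> 0"
    by (rule sum.not_neutral_contains_not_neutral)
  then show "t \<in> (\<Union>i\<in>I. supp (w i))"
    by (auto simp: supp_def)
qed

lemma supp_lincomb:
  assumes "finite I" "disjoint_family_on (\<lambda>i. supp (w i)) I"
  shows "supp (\<lambda>t. \<Sum>i\<in>I. a i * w i t) = (\<Union>i\<in>{i\<in>I. a i \<noteq> 0}. supp (w i))"
proof (intro equalityI subsetI)
  fix t assume t: "t \<in> supp (\<lambda>t. \<Sum>i\<in>I. a i * w i t)"
  then obtain i where i: "i \<in> I" "t \<in> supp (w i)"
    using supp_lincomb_subset[of a w I] by auto
  then have "a i \<noteq> 0"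
    using t lincomb_apply[OF assms i] by (auto simp: supp_def)
  with i show "t \<in> (\<Union>i\<in>{i\<in>I. a i \<noteq> 0}. supp (w i))"
    by auto
next
  fix t assume "t \<in> (\<Union>i\<in>{i\<in>I. a i \<noteq> 0}. supp (w i))"
  then obtain i where i: "i \<in> I" "a i \<noteq> 0" "t \<in> supp (w i)"
    by auto
  then show "t \<in> supp (\<lambda>t. \<Sum>i\<in>I. a i * w i t)"
    using lincomb_apply[OF assms i(1,3)] by (simp add: supp_def)
qed

lemma supp_sum_disjoint:
  assumes "finite I" "disjoint_family_on (\<lambda>i. supp (w i)) I"
  shows "supp (\<lambda>t. \<Sum>i\<in>I. w i t) = (\<Union>i\<in>I. supp (w i))"
  using supp_lincomb[OF assms, of "\<lambda>_. 1"] by simp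

lemma l1norm_lincomb:
  assumes I: "finite I" "disjoint_family_on (\<lambda>i. supp (w i)) I"
    and fin: "\<forall>i\<in>I. finite (supp (w i))"
  shows "l1norm (\<lambda>t. \<Sum>i\<in>I. a i * w i t) = (\<Sum>i\<in>I. \<bar>a i\<bar> * l1norm (w i))"
proof -
  let ?y = "\<lambda>t. \<Sum>i\<in>I. a i * w i t"
  have "l1norm ?y = (\<Sum>t\<in>(\<Union>i\<in>I. supp (w i)). \<bar>?y t\<bar>)"
    using I fin by (intro l1norm_superset) (auto simp: supp_lincomb)
  also have "\<dots> = (\<Sum>i\<in>I. \<Sum>t\<in>supp (w i). \<bar>?y t\<bar>)"
    using I fin by (intro sum.UNION_disjoint) (auto simp: disjoint_family_on_def)
  also have "\<dots> = (\<Sum>i\<in>I. \<Sum>t\<in>supp (w i). \<bar>a i\<bar> * \<bar>w i t\<bar>)"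
    using lincomb_apply[OF I] by (intro sum.cong) (auto simp: abs_mult)
  also have "\<dots> = (\<Sum>i\<in>I. \<bar>a i\<bar> * l1norm (w i))"
    by (simp add: l1norm_def sum_distrib_left)
  finally show ?thesis .
qed

lemma disjoint_family_on_unitv:
  "inj_on m I \<Longrightarrow> disjoint_family_on (\<lambda>i. supp (unitv (m i))) I"
  by (auto simp: disjoint_family_on_def supp_unitv inj_on_def)

lemma
  assumes "finite I" "inj_on m I" "c \<noteq> 0"
  shows supp_scaled_unitv_comb: "supp (\<lambda>t. c * (\<Sum>i\<in>I. a i * unitv (m i) t)) = m ` {i\<in>I. a i \<noteq> 0}"
    and l1norm_scaled_unitv_comb: "l1norm (\<lambda>t. c * (\<Sum>i\<in>I. a i * unitv (m i) t)) = \<bar>c\<bar> * (\<Sum>i\<in>I. \<bar>a i\<bar>)"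
proof -
  have eq: "(\<lambda>t. c * (\<Sum>i\<in>I. a i * unitv (m i) t)) = (\<lambda>t. \<Sum>i\<in>I. (c * a i) * unitv (m i) t)"
    by (simp add: sum_distrib_left mult.assoc)
  note disj = disjoint_family_on_unitv[OF assms(2)]
  show "supp (\<lambda>t. c * (\<Sum>i\<in>I. a i * unitv (m i) t)) = m ` {i\<in>I. a i \<noteq> 0}"
    unfolding eq supp_lincomb[OF assms(1) disj] using assms(3) by (auto simp: supp_unitv)
  show "l1norm (\<lambda>t. c * (\<Sum>i\<in>I. a i * unitv (m i) t)) = \<bar>c\<bar> * (\<Sum>i\<in>I. \<bar>a i\<bar>)"
    unfolding eq
    by (subst l1norm_lincomb[OF assms(1) disj])
      (simp_all add: supp_unitv l1norm_unitv abs_mult sum_distrib_left)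
qed

lemma supp_scaled_unitv_comb_subset: "supp (\<lambda>t. c * (\<Sum>i\<in>I. a i * unitv (m i) t)) \<subseteq> m ` I"
proof
  fix t assume "t \<in> supp (\<lambda>t. c * (\<Sum>i\<in>I. a i * unitv (m i) t))"
  then have "(\<Sum>i\<in>I. a i * unitv (m i) t) \<noteq> 0"
    by (simp add: supp_def)
  then obtain i where "i \<in> I" "a i * unitv (m i) t \<noteq> 0"
    by (rule sum.not_neutral_contains_not_neutral)
  then show "t \<in> m ` I"
    by (auto simp: unitv_def split: if_splits)
qed

lemma lincomb_sum_swap:
  fixes a :: "'i \<Rightarrow> real"
  assumes "\<And>i. i \<in> I \<Longrightarrow> z i = (\<lambda>t. \<Sum>j\<in>J. W i j t)"
  shows "(\<Sum>i\<in>I. a i * z i t) = (\<Sum>j\<in>J. \<Sum>i\<in>I. a i * W i j t)"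
proof -
  have "(\<Sum>i\<in>I. a i * z i t) = (\<Sum>i\<in>I. \<Sum>j\<in>J. a i * W i j t)"
    using assms by (intro sum.cong) (simp_all add: sum_distrib_left)
  then show ?thesis
    by (simp add: sum.swap[of _ I])
qed

lemma all_le_Suc_iff: "(\<forall>j\<le>Suc k. P j) \<longleftrightarrow> P 0 \<and> (\<forall>j\<le>k. P (Suc j))"
  using All_less_Suc2[of "Suc k" P] by (simp add: less_Suc_eq_le)

lemma disjoint_family_on_case_nat:
  "disjoint_family_on (case_nat A B) {..Suc k} \<longleftrightarrow> (\<forall>j\<le>k. A \<inter> B j = {}) \<and> disjoint_family_on B {..k}"
proof -
  have "(\<forall>j\<le>Suc k. \<forall>j'\<le>Suc k. j \<noteq> j' \<longrightarrow> case_nat A B j \<inter> case_nat A B j' = {}) \<longleftrightarrow>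
      (\<forall>j\<le>k. A \<inter> B j = {}) \<and> (\<forall>j\<le>k. \<forall>j'\<le>k. j \<noteq> j' \<longrightarrow> B j \<inter> B j' = {})"
    unfolding all_le_Suc_iff by fastforce
  then show ?thesis
    unfolding disjoint_family_on_def by (simp only: Ball_def atMost_iff)
qed

lemma disjoint_family_on_subset:
  "disjoint_family_on A I \<Longrightarrow> (\<And>i. i \<in> I \<Longrightarrow> B i \<subseteq> A i) \<Longrightarrow> disjoint_family_on B I"
  unfolding disjoint_family_on_def by blast

lemma disjoint_family_on_Union_levels:
  assumes "disjoint_family_on S I" "\<And>i. i \<in> I \<Longrightarrow> disjoint_family_on (\<lambda>j. T i j) J"
    and "\<And>i j. i \<in> I \<Longrightarrow> j \<in> J \<Longrightarrow> T i j \<subseteq> S i"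
  shows "disjoint_family_on (\<lambda>j. \<Union>i\<in>I. T i j) J"
  unfolding disjoint_family_on_def
proof (intro ballI impI)
  fix j j' assume "j \<in> J" "j' \<in> J" "j \<noteq> j'"
  have "T i j \<inter> T i' j' = {}" if "i \<in> I" "i' \<in> I" for i i'
  proof (cases "i = i'")
    case True
    then show ?thesis
      using assms(2) that \<open>j \<in> J\<close> \<open>j' \<in> J\<close> \<open>j \<noteq> j'\<close> by (simp add: disjoint_family_on_def)
  next
    case False
    then have "S i \<inter> S i' = {}"
      using assms(1) that by (simp add: disjoint_family_on_def)
    then show ?thesis
      using assms(3) that \<open>j \<in> J\<close> \<open>j' \<in> J\<close> by blast
  qed
  then show "(\<Union>i\<in>I. T i j) \<inter> (\<Union>i\<in>I. T i j') = {}"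
    by blast
qed

section \<open>Interlaced blocks\<close>

definition interlaced :: "nat \<Rightarrow> (nat \<Rightarrow> nat) \<Rightarrow> (nat \<Rightarrow> nat set) \<Rightarrow> bool" where
  "interlaced r m S \<longleftrightarrow> (\<forall>i<r. (\<forall>t\<in>S i. m i < t) \<and> (Suc i < r \<longrightarrow> (\<forall>t\<in>S i. t < m (Suc i))))"

lemma interlaced_subset: "interlaced r m S \<Longrightarrow> (\<And>i. i < r \<Longrightarrow> T i \<subseteq> S i) \<Longrightarrow> interlaced r m T"
  unfolding interlaced_def by blast

lemma interlaced_strict_mono_on:
  assumes "interlaced r m S" "\<forall>i<r. S i \<noteq> {}"
  shows "strict_mono_on {..<r} m"
proof (rule strict_mono_onI)
  have step: "m i < m (Suc i)" if "Suc i < r" for i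
  proof -
    have "S i \<noteq> {}"
      using assms(2) that by simp
    then obtain t where "t \<in> S i"
      by blast
    moreover have "i < r"
      using that by simp
    ultimately have "m i < t" "t < m (Suc i)"
      using assms(1) that unfolding interlaced_def by blast+
    then show ?thesis
      by simp
  qed
  fix i i' assume "i \<in> {..<r}" "i' \<in> {..<r}" "i < i'"
  moreover have "{i..<i'} \<subseteq> {j. Suc j < r}"
    using \<open>i' \<in> {..<r}\<close> by auto
  ultimately show "m i < m i'"
    using lift_Suc_mono_less_ivl[where N = "{j. Suc j < r}" and f = m] step by blast
qed

lemma interlaced_blk_less:
  assumes "interlaced r m S" "strict_mono_on {..<r} m" "i < i'" "i' < r"
  shows "blk_less (S i) (S i')"
  unfolding blk_less_def
proof (intro ballI)
  fix t t' assume "t \<in> S i" "t' \<in> S i'"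
  then have "t < m (Suc i)" "m i' < t'"
    using assms unfolding interlaced_def by auto
  moreover have "m (Suc i) \<le> m i'"
    using strict_mono_on_leD[OF assms(2)] assms by auto
  ultimately show "t < t'"
    by simp
qed

lemma disjoint_if_blk_less: "blk_less A B \<Longrightarrow> A \<inter> B = {}"
  by (auto simp: blk_less_def)

lemma interlaced_disjoint:
  assumes "interlaced r m S" "strict_mono_on {..<r} m"
  shows "disjoint_family_on S {..<r}"
  unfolding disjoint_family_on_def
proof (intro ballI impI)
  fix i i' assume "i \<in> {..<r}" "i' \<in> {..<r}" "i \<noteq> i'"
  then consider "i < i'" "i' < r" | "i' < i" "i < r"
    by fastforce
  then show "S i \<inter> S i' = {}"
    by cases (use interlaced_blk_less[OF assms] disjoint_if_blk_less in blast)+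
qed

lemma interlaced_notin:
  assumes "interlaced r m S" "strict_mono_on {..<r} m" "i < r" "i' < r"
  shows "m i' \<notin> S i"
proof
  assume t: "m i' \<in> S i"
  show False
  proof (cases "i' \<le> i")
    case True
    then have "m i' \<le> m i"
      using strict_mono_on_leD[OF assms(2)] assms by auto
    then show False
      using t assms unfolding interlaced_def by force
  next
    case False
    then have "m (Suc i) \<le> m i'"
      using strict_mono_on_leD[OF assms(2)] assms by auto
    moreover have "m i' < m (Suc i)"
      using t assms False unfolding interlaced_def by auto
    ultimately show False
      by simp
  qed
qed

lemma interlaced_lincomb:
  fixes w :: "nat \<Rightarrow> nat \<Rightarrow> real"
  assumes X: "spreading_by_maps X"
    and interl: "interlaced r m (\<lambda>i. supp (w i))"
    and w: "\<And>i. i < r \<Longrightarrow> w i \<in> c00 \<and> l1norm (w i) = L \<and> supp (w i) \<in> N \<and> supp (w i) \<subseteq> A"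
    and L: "0 < L" and a: "(\<Sum>i<r. \<bar>a i\<bar>) = 1"
    and mX: "m ` {i\<in>{..<r}. a i \<noteq> 0} \<in> X"
  defines "y \<equiv> \<lambda>t. \<Sum>i<r. a i * w i t"
  shows "y \<in> c00" "l1norm y = L" "supp y \<in> bracket X N" "supp y \<subseteq> A"
proof -
  have fin: "finite (supp (w i))" if "i < r" for i
    using w[OF that] by (simp add: c00_def)
  have ne: "supp (w i) \<noteq> {}" if "i < r" for i
    using w[OF that] L l1norm_supp_empty by force
  have mono: "strict_mono_on {..<r} m"
    using interlaced_strict_mono_on[OF interl] ne by blast
  have disj: "disjoint_family_on (\<lambda>i. supp (w i)) {..<r}"
    using interlaced_disjoint[OF interl mono] .
  have supp_y: "supp y = (\<Union>i\<in>{i\<in>{..<r}. a i \<noteq> 0}. supp (w i))"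
    unfolding y_def using disj by (intro supp_lincomb) auto
  show "y \<in> c00"
    using fin by (simp add: c00_def supp_y)
  have "l1norm y = (\<Sum>i<r. \<bar>a i\<bar> * l1norm (w i))"
    unfolding y_def using disj fin by (intro l1norm_lincomb) auto
  also have "\<dots> = L"
    using w a by (simp add: sum_distrib_right[symmetric])
  finally show "l1norm y = L" .
  have "(\<Union>i\<in>{i\<in>{..<r}. a i \<noteq> 0}. supp (w i)) \<in> bracket X N"
  proof (rule Union_blocks_in_bracket[OF X])
    show "strict_mono_on {i\<in>{..<r}. a i \<noteq> 0} m"
      using mono by (rule monotone_on_subset) auto
    show "\<forall>i\<in>{i\<in>{..<r}. a i \<noteq> 0}. \<forall>i'\<in>{i\<in>{..<r}. a i \<noteq> 0}. i < i' \<longrightarrow> blk_less (supp (w i)) (supp (w i'))"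
      using interlaced_blk_less[OF interl mono] by auto
    show "\<forall>i\<in>{i\<in>{..<r}. a i \<noteq> 0}. \<forall>t\<in>supp (w i). m i \<le> t"
      using interl unfolding interlaced_def by (auto intro: less_imp_le)
  qed (use mX w fin ne in auto)
  then show "supp y \<in> bracket X N"
    unfolding supp_y .
  show "supp y \<subseteq> A"
    using w unfolding supp_y by auto
qed

lemma disjoint_family_on_interlaced_levels:
  assumes interl: "interlaced r m S" and mono: "strict_mono_on {..<r} m"
    and T: "\<And>i. i < r \<Longrightarrow> disjoint_family_on (T i) {..k}" "\<And>i j. i < r \<Longrightarrow> j \<le> k \<Longrightarrow> T i j \<subseteq> S i"
    and H: "H \<subseteq> m ` {..<r}" and L: "\<And>j. j \<le> k \<Longrightarrow> L j \<subseteq> (\<Union>i<r. T i j)"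
  shows "disjoint_family_on (case_nat H L) {..Suc k}"
  unfolding disjoint_family_on_case_nat
proof
  have "m ` {..<r} \<inter> (\<Union>i<r. S i) = {}"
    using interlaced_notin[OF interl mono] by auto
  moreover have "L j \<subseteq> (\<Union>i<r. S i)" if "j \<le> k" for j
  proof -
    have "(\<Union>i<r. T i j) \<subseteq> (\<Union>i<r. S i)"
      by (rule UN_mono) (use T(2) that in auto)
    then show ?thesis
      by (rule order_trans[OF L[OF that]])
  qed
  ultimately show "\<forall>j\<le>k. H \<inter> L j = {}"
    using H by blast
  have "disjoint_family_on (\<lambda>j. \<Union>i\<in>{..<r}. T i j) {..k}"
  proof (rule disjoint_family_on_Union_levels[OF interlaced_disjoint[OF interl mono]])
    show "disjoint_family_on (\<lambda>j. T i j) {..k}" if "i \<in> {..<r}" for i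
      using T(1) that by simp
    show "T i j \<subseteq> S i" if "i \<in> {..<r}" "j \<in> {..k}" for i j
      using T(2) that by simp
  qed
  then show "disjoint_family_on L {..k}"
    by (rule disjoint_family_on_subset) (use L in simp)
qed

section \<open>The decomposition\<close>

definition piece :: "(nat \<Rightarrow> real) \<Rightarrow> (nat \<Rightarrow> nat) \<Rightarrow> (nat \<Rightarrow> ord) \<Rightarrow> (nat \<Rightarrow> nat set)
    \<Rightarrow> nat \<Rightarrow> nat \<Rightarrow> (nat \<Rightarrow> real) \<Rightarrow> bool" where
  "piece \<theta> p \<eta> M n j v \<longleftrightarrow> v \<in> c00 \<and> l1norm v = 1 / \<theta> (p (n + j))
     \<and> supp v \<in> blist (map (\<lambda>i. schreier (OS (\<eta> i))) [n..<Suc (n + j)]) \<and> supp v \<subseteq> M (n + j)"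

definition decomposes :: "(nat \<Rightarrow> real) \<Rightarrow> (nat \<Rightarrow> nat) \<Rightarrow> (nat \<Rightarrow> ord) \<Rightarrow> (nat \<Rightarrow> nat set)
    \<Rightarrow> nat \<Rightarrow> nat \<Rightarrow> (nat \<Rightarrow> real) \<Rightarrow> (nat \<Rightarrow> nat \<Rightarrow> real) \<Rightarrow> bool" where
  "decomposes \<theta> p \<eta> M n k x y \<longleftrightarrow> (\<forall>j\<le>k. piece \<theta> p \<eta> M n j (y j))
     \<and> disjoint_family_on (\<lambda>j. supp (y j)) {..k} \<and> x = (\<lambda>t. \<Sum>j\<le>k. y j t)"

lemma piece_if_Z1: "x \<in> Z1 \<theta> p \<eta> M Kc n \<Longrightarrow> piece \<theta> p \<eta> M n 0 x"
  unfolding Z1_def piece_def by simp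

lemma piece_lincomb:
  assumes \<theta>: "\<forall>i. 0 < \<theta> i"
    and interl: "interlaced r m (\<lambda>i. supp (w i))"
    and w: "\<And>i. i < r \<Longrightarrow> piece \<theta> p \<eta> M (Suc n) j (w i)"
    and a: "(\<Sum>i<r. \<bar>a i\<bar>) = 1"
    and m: "m ` {i\<in>{..<r}. a i \<noteq> 0} \<in> schreier (OS (\<eta> n))"
  shows "piece \<theta> p \<eta> M n (Suc j) (\<lambda>t. \<Sum>i<r. a i * w i t)"
proof -
  let ?Ns = "map (\<lambda>i. schreier (OS (\<eta> i))) [Suc n..<Suc (Suc n + j)]"
  note comb = interlaced_lincomb[OF spreading_by_maps_schreier interl _ _ a m,
      where N = "blist ?Ns" and L = "1 / \<theta> (p (Suc n + j))" and A = "M (Suc n + j)"]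
  have "bracket (schreier (OS (\<eta> n))) (blist ?Ns) \<subseteq> blist (schreier (OS (\<eta> n)) # ?Ns)"
    by (rule bracket_blist_subset) (auto simp del: schreier.simps intro: finite_schreier)
  also have "schreier (OS (\<eta> n)) # ?Ns = map (\<lambda>i. schreier (OS (\<eta> i))) [n..<Suc (n + Suc j)]"
    by (simp add: upt_conv_Cons del: upt_Suc)
  finally show ?thesis
    using comb w \<theta> unfolding piece_def by auto
qed

lemma piece_supp_nonempty:
  assumes "\<forall>i. 0 < \<theta> i" "piece \<theta> p \<eta> M n j v"
  shows "supp v \<noteq> {}"
proof
  assume "supp v = {}"
  then have "l1norm v = 0"
    by (rule l1norm_supp_empty)
  moreover have "0 < \<theta> (p (n + j))"
    using assms(1) by blast
  ultimately show False
    using assms(2) unfolding piece_def by simp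
qed

lemma decomposes_supp_subset:
  assumes "decomposes \<theta> p \<eta> M n k x y" "j \<le> k"
  shows "supp (y j) \<subseteq> supp x"
  using assms supp_sum_disjoint[of "{..k}" y] unfolding decomposes_def by auto

lemma Z1_unitv_combD:
  fixes r :: nat
  assumes "0 < \<theta> (p n)" "inj_on m {..<r}"
    and "(\<lambda>t. 1 / \<theta> (p n) * (\<Sum>i<r. a i * unitv (m i) t)) \<in> Z1 \<theta> p \<eta> M Kc n"
  shows "(\<Sum>i<r. \<bar>a i\<bar>) = 1" "m ` {i\<in>{..<r}. a i \<noteq> 0} \<in> schreier (OS (\<eta> n))"
proof -
  have c: "1 / \<theta> (p n) \<noteq> 0"
    using assms(1) by simp
  have Z: "l1norm (\<lambda>t. 1 / \<theta> (p n) * (\<Sum>i<r. a i * unitv (m i) t)) = 1 / \<theta> (p n)"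
    "supp (\<lambda>t. 1 / \<theta> (p n) * (\<Sum>i<r. a i * unitv (m i) t)) \<in> schreier (OS (\<eta> n))"
    using assms(3) unfolding Z1_def by blast+
  have "\<bar>1 / \<theta> (p n)\<bar> * (\<Sum>i<r. \<bar>a i\<bar>) = 1 / \<theta> (p n)"
    using Z(1) unfolding l1norm_scaled_unitv_comb[OF finite_lessThan[of r] assms(2) c] .
  then show "(\<Sum>i<r. \<bar>a i\<bar>) = 1"
    using assms(1) by simp
  show "m ` {i\<in>{..<r}. a i \<noteq> 0} \<in> schreier (OS (\<eta> n))"
    using Z(2) unfolding supp_scaled_unitv_comb[OF finite_lessThan[of r] assms(2) c] .
qed

lemma decomposes_Suc:
  assumes \<theta>: "\<forall>i. 0 < \<theta> i"
    and interl: "interlaced r m (\<lambda>i. supp (z i))"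
    and head: "(\<lambda>t. 1 / \<theta> (p n) * (\<Sum>i<r. a i * unitv (m i) t)) \<in> Z1 \<theta> p \<eta> M Kc n"
    and W: "\<And>i. i < r \<Longrightarrow> decomposes \<theta> p \<eta> M (Suc n) k (z i) (W i)"
  shows "decomposes \<theta> p \<eta> M n (Suc k)
           (\<lambda>t. 1 / \<theta> (p n) * (\<Sum>i<r. a i * unitv (m i) t) + (\<Sum>i<r. a i * z i t))
           (case_nat (\<lambda>t. 1 / \<theta> (p n) * (\<Sum>i<r. a i * unitv (m i) t)) (\<lambda>j t. \<Sum>i<r. a i * W i j t))"
    (is "decomposes _ _ _ _ _ _ (\<lambda>t. ?y0 t + _) (case_nat ?y0 ?Y)")
proof -
  have W_piece: "piece \<theta> p \<eta> M (Suc n) j (W i j)" if "i < r" "j \<le> k" for i j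
    using W[OF that(1)] that(2) unfolding decomposes_def by blast
  have W_sub: "supp (W i j) \<subseteq> supp (z i)" if "i < r" "j \<le> k" for i j
    using decomposes_supp_subset[OF W] that .
  have "\<forall>i<r. supp (z i) \<noteq> {}"
    using piece_supp_nonempty[OF \<theta> W_piece] W_sub by blast
  then have m_mono: "strict_mono_on {..<r} m"
    by (rule interlaced_strict_mono_on[OF interl])
  have inj: "inj_on m {..<r}"
    using strict_mono_on_imp_inj_on[OF m_mono] .
  note a = Z1_unitv_combD[OF \<theta>[rule_format] inj head]
  have Y_piece: "piece \<theta> p \<eta> M n (Suc j) (?Y j)" if "j \<le> k" for j
  proof (rule piece_lincomb[OF \<theta>])
    show "interlaced r m (\<lambda>i. supp (W i j))"
      by (rule interlaced_subset[OF interl]) (use W_sub that in blast)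
  qed (use W_piece that a in auto)
  have "disjoint_family_on (case_nat (supp ?y0) (\<lambda>j. supp (?Y j))) {..Suc k}"
  proof (rule disjoint_family_on_interlaced_levels[OF interl m_mono])
    show "disjoint_family_on (\<lambda>j. supp (W i j)) {..k}" if "i < r" for i
      using W[OF that] unfolding decomposes_def by blast
    show "supp ?y0 \<subseteq> m ` {..<r}"
      by (rule supp_scaled_unitv_comb_subset)
    show "supp (?Y j) \<subseteq> (\<Union>i<r. supp (W i j))" for j
      by (rule supp_lincomb_subset)
  qed (use W_sub in auto)
  moreover have "(\<lambda>j. supp (case_nat ?y0 ?Y j)) = case_nat (supp ?y0) (\<lambda>j. supp (?Y j))"
    by (rule ext) (simp split: nat.split)
  moreover have "(\<lambda>t. ?y0 t + (\<Sum>i<r. a i * z i t)) = (\<lambda>t. \<Sum>j\<le>Suc k. case_nat ?y0 ?Y j t)"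
  proof -
    have "(\<Sum>i<r. a i * z i t) = (\<Sum>j\<le>k. ?Y j t)" for t
      using W unfolding decomposes_def by (intro lincomb_sum_swap) simp
    then show ?thesis
      unfolding sum.atMost_Suc_shift by simp
  qed
  ultimately show ?thesis
    unfolding decomposes_def all_le_Suc_iff using piece_if_Z1[OF head] Y_piece by simp
qed

lemma decomposition_exists:
  assumes \<theta>: "\<forall>i. 0 < \<theta> i"
  shows "x \<in> Zset \<theta> p \<eta> M Kc n k \<Longrightarrow> \<exists>y. decomposes \<theta> p \<eta> M n k x y"
proof (induction k arbitrary: n x)
  case 0
  then have "decomposes \<theta> p \<eta> M n 0 x (\<lambda>_. x)"
    by (auto simp: decomposes_def disjoint_family_on_def piece_if_Z1)
  then show ?case
    by blast
next
  case (Suc k)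
  then obtain r a m z where
    interl: "interlaced r m (\<lambda>i. supp (z i))"
    and head: "(\<lambda>t. 1 / \<theta> (p n) * (\<Sum>i<r. a i * unitv (m i) t)) \<in> Z1 \<theta> p \<eta> M Kc n"
    and z: "\<forall>i<r. z i \<in> Zset \<theta> p \<eta> M Kc (Suc n) k"
    and x: "x = (\<lambda>t. 1 / \<theta> (p n) * (\<Sum>i<r. a i * unitv (m i) t) + (\<Sum>i<r. a i * z i t))"
    unfolding interlaced_def by auto
  have "\<forall>i<r. \<exists>w. decomposes \<theta> p \<eta> M (Suc n) k (z i) w"
    using Suc.IH z by blast
  then obtain W where "\<And>i. i < r \<Longrightarrow> decomposes \<theta> p \<eta> M (Suc n) k (z i) (W i)"
    by metis
  then show ?case
    using decomposes_Suc[OF \<theta> interl head] x by blast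
qed

theorem proposition9:
  fixes \<theta> :: "nat \<Rightarrow> real" and \<F> :: "nat \<Rightarrow> nat set set"
    and \<epsilon> :: real and \<beta> \<eta> :: "nat \<Rightarrow> ord" and p q Kc :: "nat \<Rightarrow> nat"
    and M :: "nat \<Rightarrow> nat set" and n k :: nat and x :: "nat \<Rightarrow> real"
  assumes theta_range: "\<forall>i. 0 < \<theta> i \<and> \<theta> i < 1"
    and theta_noninc: "\<forall>i. \<theta> (Suc i) \<le> \<theta> i"
    and theta_null: "\<theta> \<longlonglongrightarrow> 0"
    and F_regular: "\<forall>i. regular_family (\<F> i)"
    and eps: "0 < \<epsilon>" "\<epsilon> < 1"
    and M0: "infinite (M 0)" "0 \<notin> M 0"
    and M_inf: "\<forall>j. infinite (M j)"
    and M_nested: "\<forall>j. M (Suc j) \<subseteq> M j"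
    and p_q_order: "\<forall>j\<ge>1. p j < q j \<and> q j < p (Suc j)"
    and theta_p: "\<forall>j\<ge>1. \<theta> (p j) \<le> \<epsilon>^2 / 4^j"
    and theta_q: "\<forall>j\<ge>1. \<theta> (q j) \<le> \<epsilon> * \<theta> (p j) / 4^j"
    and M_F: "\<forall>j\<ge>1. blist (schreier (\<beta> j) # map (\<lambda>i. schreier (OS (\<eta> i))) [1..<Suc j])
                    \<inter> {A. finite A \<and> A \<subseteq> M j} \<subseteq> \<F> (p j)"
    and n_pos: "1 \<le> n"
    and x_in: "x \<in> Zset \<theta> p \<eta> M Kc n k"
  shows "\<exists>y :: nat \<Rightarrow> nat \<Rightarrow> real.
           (\<forall>j\<le>k. y j \<in> c00)
         \<and> (\<forall>j\<le>k. \<forall>j'\<le>k. j \<noteq> j' \<longrightarrow> supp (y j) \<inter> supp (y j') = {})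
         \<and> x = (\<lambda>t. \<Sum>j\<le>k. y j t)
         \<and> (\<forall>j\<le>k. l1norm (y j) = 1 / \<theta> (p (n + j)))
         \<and> (\<forall>j\<le>k. supp (y j) \<in> blist (map (\<lambda>i. schreier (OS (\<eta> i))) [n..<Suc (n + j)])
                 \<and> supp (y j) \<subseteq> M (n + j))"
proof -
  have "\<forall>i. 0 < \<theta> i"
    using theta_range by blast
  then obtain y where "decomposes \<theta> p \<eta> M n k x y"
    using decomposition_exists x_in by blast
  then show ?thesis
    unfolding decomposes_def piece_def disjoint_family_on_def by (intro exI[of _ y]) auto
qed

end
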